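(* Let $A\in\mathrm{SL}(2,\mathbb R)$ and $\tau>0$ with $A\Lambda_q\cap S_\tau\ne\emptyset$, and let $(\mathbf u_n=(q_n,a_n)^T)_{n\ge0}$ be elements of $A\Lambda_q\cap S_\tau$ with successive slopes, i.e. for each $n$, $\mathbf u_{n+1}$ is the element of $A\Lambda_q\cap S_\tau$ of smallest slope strictly greater than $a_n/q_n$. Then $s_{1/\tau}h_{a_0/q_0}A\Lambda_q$ contains the horizontal vector $(q_0/\tau,0)^T\in S_1$, and hence equals $g_{a,b}\Lambda_q$ for a unique $(a,b)\in\mathscr T^q$. Moreover: (1) for each $n\ge0$, $s_{1/\tau}h_{a_n/q_n}A\Lambda_q$ contains the horizontal vector $(q_n/\tau,0)^T\in S_1$ and $s_{1/\tau}h_{a_n/q_n}A\Lambda_q=g_{\mathrm{BCZ}_q^n(a,b)}\Lambda_q$; i.e. $\mathrm{FTR}_q(A,\tau,\mathbf u_n)=\mathrm{BCZ}_q^n(\mathrm{FTR}_q(A,\tau,\mathbf u_0))$; (2) writing $L_n^q(a,b)$ for the first coordinate of $\mathrm{BCZ}_q^n(a,b)$, we have $q_n=\tau L_n^q(a,b)=\tau L_0^q(\mathrm{BCZ}_q^n(a,b))$, and for all $n\ge0$ $$a_{n+1}=q_{n+1}\left(\frac{a_n}{q_n}+\frac1{\tau^2}R_q(\mathrm{BCZ}_q^n(a,b))\right).$$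
   Context: Fix an integer $q\ge3$, let $\lambda_q=2\cos(\pi/q)$, and let $G_q\subset \mathrm{SL}(2,\mathbb R)$ be the Hecke triangle group generated by $S=\begin{pmatrix}0&-1\\1&0\end{pmatrix}$ and $T_q=\begin{pmatrix}1&\lambda_q\\0&1\end{pmatrix}$, acting linearly on $\mathbb R^2$; $\Lambda_q=G_q(1,0)^T$, $A\Lambda_q=\{A\mathbf v:\mathbf v\in\Lambda_q\}$. Matrices: $h_s=\begin{pmatrix}1&0\\-s&1\end{pmatrix}$, $s_\tau=\begin{pmatrix}\tau&0\\0&\tau^{-1}\end{pmatrix}$, $g_{a,b}=\begin{pmatrix}a&b\\0&a^{-1}\end{pmatrix}$, with $g_{(a,b)}:=g_{a,b}$. $S_\tau=\{(x,y)^T:0<x\le\tau\}$; slope of $(x,y)^T$ with $x\ne0$ is $y/x$. $\mathscr T^q=\{(a,b):0<a\le1,\ 1-\lambda_qa<b\le1\}$. Facts (established earlier): for every $(a,b)\in\mathscr T^q$, $g_{a,b}\Lambda_q\cap S_1$ contains a vector of smallest positive slope, denoted $R_q(a,b)$ (the $G_q$-roof function); and whenever $B\Lambda_q$ ($B\in\mathrm{SL}(2,\mathbb R)$) contains a horizontal vector $(c,0)^T$ with $0<c\le1$ there is a unique $(a',b')\in\mathscr T^q$ with $B\Lambda_q=g_{a',b'}\Lambda_q$, and $a'=c$. The $G_q$-BCZ map $\mathrm{BCZ}_q:\mathscr T^q\to\mathscr T^q$ sends $(a,b)$ to the unique $(c,d)\in\mathscr T^q$ with $h_{R_q(a,b)}g_{a,b}\Lambda_q=g_{c,d}\Lambda_q$.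 For $\mathbf u\in A\Lambda_q\cap S_\tau$, the Farey triangle representative $\mathrm{FTR}_q(A,\tau,\mathbf u)$ is the unique $(a,b)\in\mathscr T^q$ with $s_{1/\tau}h_{\mathrm{slope}(\mathbf u)}A\Lambda_q=g_{a,b}\Lambda_q$. *)

theory Defs
  imports Complex_Main
begin

text \<open>2x2 real matrices are represented as quadruples (a,b,c,d) standing for
  the matrix with rows (a b) and (c d); vectors of R^2 are pairs (x,y).\<close>

type_synonym mat2 = "real \<times> real \<times> real \<times> real"
type_synonym vec2 = "real \<times> real"

fun mmul :: "mat2 \<Rightarrow> mat2 \<Rightarrow> mat2" where
  "mmul (a,b,c,d) (e,f,g,h) = (a*e + b*g, a*f + b*h, c*e + d*g, c*f + d*h)"

fun mvec :: "mat2 \<Rightarrow> vec2 \<Rightarrow> vec2" where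
  "mvec (a,b,c,d) (x,y) = (a*x + b*y, c*x + d*y)"

fun mdet :: "mat2 \<Rightarrow> real" where
  "mdet (a,b,c,d) = a*d - b*c"

definition mid :: mat2 where "mid = (1,0,0,1)"

definition lam :: "nat \<Rightarrow> real" where
  "lam q = 2 * cos (pi / real q)"

definition Smat :: mat2 where "Smat = (0,-1,1,0)"
definition Sinv :: mat2 where "Sinv = (0,1,-1,0)"
definition Tmat :: "nat \<Rightarrow> mat2" where "Tmat q = (1, lam q, 0, 1)"
definition Tinv :: "nat \<Rightarrow> mat2" where "Tinv q = (1, - lam q, 0, 1)"

inductive_set Hecke :: "nat \<Rightarrow> mat2 set" for q where
  one: "mid \<in> Hecke q"
| gen: "g \<in> Hecke q \<Longrightarrow> X \<in> {Smat, Sinv, Tmat q, Tinv q} \<Longrightarrow> mmul X g \<in> Hecke q"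

definition Lam :: "nat \<Rightarrow> vec2 set" where
  "Lam q = {mvec g (1,0) | g. g \<in> Hecke q}"

definition img :: "mat2 \<Rightarrow> vec2 set \<Rightarrow> vec2 set" where
  "img A X = mvec A ` X"

definition hmat :: "real \<Rightarrow> mat2" where "hmat s = (1, 0, -s, 1)"
definition smat :: "real \<Rightarrow> mat2" where "smat t = (t, 0, 0, 1/t)"
definition gmat :: "real \<times> real \<Rightarrow> mat2" where "gmat p = (fst p, snd p, 0, 1 / fst p)"

definition Strip :: "real \<Rightarrow> vec2 set" where
  "Strip t = {v. 0 < fst v \<and> fst v \<le> t}"

definition slope :: "vec2 \<Rightarrow> real" where
  "slope v = snd v / fst v"

definition Tq :: "nat \<Rightarrow> (real \<times> real) set" where
  "Tq q = {(a,b). 0 < a \<and> a \<le> 1 \<and> 1 - lam q * a < b \<and> b \<le> 1}"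

definition roof :: "nat \<Rightarrow> real \<times> real \<Rightarrow> real" where
  "roof q p = (THE s. \<exists>v \<in> img (gmat p) (Lam q) \<inter> Strip 1. slope v = s \<and> 0 < s \<and>
       (\<forall>w \<in> img (gmat p) (Lam q) \<inter> Strip 1. 0 < slope w \<longrightarrow> s \<le> slope w))"

definition BCZ :: "nat \<Rightarrow> real \<times> real \<Rightarrow> real \<times> real" where
  "BCZ q p = (THE r. r \<in> Tq q \<and>
       img (mmul (hmat (roof q p)) (gmat p)) (Lam q) = img (gmat r) (Lam q))"

definition FTR :: "nat \<Rightarrow> mat2 \<Rightarrow> real \<Rightarrow> vec2 \<Rightarrow> real \<times> real" where
  "FTR q A t u = (THE r. r \<in> Tq q \<and>
       img (mmul (smat (1/t)) (mmul (hmat (slope u)) A)) (Lam q) = img (gmat r) (Lam q))"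

end

theory Submission
  imports Defs
begin

text \<open>Put \<open>s j = sin (j \<pi>/q) / sin (\<pi>/q)\<close> and let \<open>V j = (T S)^j T\<close>, the matrix with
  rows \<open>(s (j+1), s (j+2))\<close> and \<open>(s j, s (j+1))\<close>. For \<open>j \<le> q\<close> these entries are 0 or at least 1,
  and the Hecke relation reads \<open>V (q-1) = S\<close>. It follows that every vector of \<open>\<Lambda>\<^sub>q\<close> is a power of
  \<open>S\<close> applied to a product of matrices \<open>V j\<close> applied to a basis vector, so each of its coordinates
  is 0 or at least 1 in absolute value. Hence the horizontal vectors of \<open>\<Lambda>\<^sub>q\<close> are \<open>(\<plusminus>1, 0)\<close> and
  the only vector \<open>(t, 1)\<close> of \<open>\<Lambda>\<^sub>q\<close> with \<open>\<bar>t\<bar> < \<lambda>\<^sub>q\<close> is \<open>(0, 1)\<close>: this makes the Farey triangle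
  representative of a lattice unique, and it exists because powers of \<open>T\<close> shift \<open>b\<close> by multiples
  of \<open>a \<lambda>\<^sub>q\<close>.

  For the dynamics, \<open>smat (1/\<tau>) * hmat \<sigma>\<close>, with \<open>\<sigma>\<close> the slope of \<open>u\<close>, sends \<open>u\<close> to the
  horizontal vector \<open>(fst u / \<tau>, 0)\<close>, the strip of width \<open>\<tau>\<close> onto that of width 1, and slopes
  \<open>\<sigma>'\<close> to \<open>\<tau>\<^sup>2 (\<sigma>' - \<sigma>)\<close>. So the roof at the representative of \<open>u n\<close> is \<open>\<tau>\<^sup>2\<close> times the slope
  gap to \<open>u (n+1)\<close>, and the identity
  \<open>hmat (\<tau>\<^sup>2 (\<sigma>' - \<sigma>)) * smat (1/\<tau>) * hmat \<sigma> = smat (1/\<tau>) * hmat \<sigma>'\<close>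
  turns one step along the sequence into one step of the BCZ map.\<close>

section \<open>Matrix algebra\<close>

lemma mmul_assoc: "mmul (mmul X Y) Z = mmul X (mmul Y Z)"
  by (cases X rule: prod_cases4; cases Y rule: prod_cases4; cases Z rule: prod_cases4)
    (simp add: algebra_simps)

lemma mvec_mmul: "mvec (mmul X Y) v = mvec X (mvec Y v)"
  by (cases X rule: prod_cases4; cases Y rule: prod_cases4; cases v) (simp add: algebra_simps)

lemma mdet_mmul: "mdet (mmul X Y) = mdet X * mdet Y"
  by (cases X rule: prod_cases4; cases Y rule: prod_cases4) (simp add: algebra_simps)

lemma mmul_mid [simp]: "mmul mid X = X" "mmul X mid = X"
  by (cases X rule: prod_cases4; simp add: mid_def)+

lemma mvec_mid [simp]: "mvec mid v = v"
  by (cases v) (simp add: mid_def)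

lemma img_mmul: "img (mmul X Y) V = img X (img Y V)"
  by (auto simp: img_def image_image mvec_mmul)

lemma mvec_Smat: "mvec Smat w = (- snd w, fst w)"
  by (cases w) (simp add: Smat_def)

lemma mvec_Sinv_eq_Smat_cubed: "mvec Sinv w = (mvec Smat ^^ 3) w"
  by (cases w) (simp add: Sinv_def Smat_def numeral_eq_Suc)

text \<open>\<open>S\<^sup>2 = -1\<close> is central.\<close>
lemma mvec_commute_Smat_pow_even: "mvec X ((mvec Smat ^^ (2 * m)) w) = (mvec Smat ^^ (2 * m)) (mvec X w)"
proof (induction m)
  case (Suc m)
  have "mvec X (mvec Smat (mvec Smat v)) = mvec Smat (mvec Smat (mvec X v))" for v
    by (cases X rule: prod_cases4; cases v) (simp add: Smat_def)
  with Suc show ?case by (simp add: numeral_eq_Suc)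
qed simp

section \<open>The Hecke group\<close>

lemma lam_pos: "q \<ge> 3 \<Longrightarrow> 0 < lam q"
  and lam_less_2: "q \<ge> 3 \<Longrightarrow> lam q < 2"
proof -
  assume "q \<ge> 3"
  then have p0: "0 < pi / real q" and p1: "pi / real q < pi / 2"
    by (simp_all add: field_simps)
  show "0 < lam q" using cos_gt_zero[OF p0 p1] by (simp add: lam_def)
  have "cos (pi / real q) < cos 0" using cos_monotone_0_pi[of 0 "pi / real q"] p0 p1 by simp
  then show "lam q < 2" by (simp add: lam_def)
qed

lemma Tinv_Tmat: "mmul (Tinv q) (Tmat q) = mid"
  and Tmat_Tinv: "mmul (Tmat q) (Tinv q) = mid"
  and Sinv_Smat: "mmul Sinv Smat = mid"
  and Smat_Sinv: "mmul Smat Sinv = mid"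
  by (simp_all add: Tinv_def Tmat_def Sinv_def Smat_def mid_def)

lemma Hecke_det: "g \<in> Hecke q \<Longrightarrow> mdet g = 1"
  by (induction rule: Hecke.induct)
    (auto simp: mdet_mmul mid_def Smat_def Sinv_def Tmat_def Tinv_def)

lemma Hecke_mmul: "g \<in> Hecke q \<Longrightarrow> h \<in> Hecke q \<Longrightarrow> mmul g h \<in> Hecke q"
  by (induction rule: Hecke.induct) (auto simp: mmul_assoc intro: Hecke.gen)

lemma Hecke_generator: "X \<in> {Smat, Sinv, Tmat q, Tinv q} \<Longrightarrow> X \<in> Hecke q"
  using Hecke.gen[OF Hecke.one, of X q] by simp

lemma Hecke_inverse: "g \<in> Hecke q \<Longrightarrow> \<exists>g'\<in>Hecke q. mmul g g' = mid"
proof (induction rule: Hecke.induct)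
  case one
  then show ?case using Hecke.one by auto
next
  case (gen g X)
  then obtain g' where g': "g' \<in> Hecke q" "mmul g g' = mid" by blast
  obtain X' where X': "X' \<in> {Smat, Sinv, Tmat q, Tinv q}" "mmul X X' = mid"
    using gen.hyps(2) Tinv_Tmat Tmat_Tinv Sinv_Smat Smat_Sinv by blast
  have "mmul (mmul X g) (mmul g' X') = mid"
    by (metis X'(2) g'(2) mmul_assoc mmul_mid(1))
  with Hecke_mmul[OF g'(1) Hecke_generator[OF X'(1)]] show ?case by blast
qed

lemma img_Hecke_Lam: assumes "g \<in> Hecke q" shows "img g (Lam q) = Lam q"
proof
  show "img g (Lam q) \<subseteq> Lam q"
  proof
    fix w assume "w \<in> img g (Lam q)"
    then obtain h where "h \<in> Hecke q" "w = mvec (mmul g h) (1, 0)"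
      unfolding img_def Lam_def by (auto simp: mvec_mmul)
    then show "w \<in> Lam q" using Hecke_mmul[OF assms] unfolding Lam_def by blast
  qed
  obtain g' where g': "g' \<in> Hecke q" "mmul g g' = mid" using Hecke_inverse[OF assms] by blast
  show "Lam q \<subseteq> img g (Lam q)"
  proof
    fix w assume "w \<in> Lam q"
    then obtain h where h: "h \<in> Hecke q" "w = mvec h (1, 0)" unfolding Lam_def by blast
    then have "w = mvec g (mvec (mmul g' h) (1, 0))"
      using g'(2) by (simp add: mvec_mmul[symmetric] mmul_assoc[symmetric])
    moreover have "mvec (mmul g' h) (1, 0) \<in> Lam q"
      using Hecke_mmul[OF g'(1) h(1)] unfolding Lam_def by blast
    ultimately show "w \<in> img g (Lam q)" unfolding img_def by blast
  qed
qed

lemma mvec_Hecke_Lam: "g \<in> Hecke q \<Longrightarrow> w \<in> Lam q \<Longrightarrow> mvec g w \<in> Lam q"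
  using img_Hecke_Lam[of g q] unfolding img_def by blast

lemma e1_in_Lam: "(1, 0) \<in> Lam q"
proof -
  have "(1, 0) = mvec mid (1, 0)" by simp
  then show ?thesis using Hecke.one unfolding Lam_def by blast
qed

lemma e2_in_Lam: "(0, 1) \<in> Lam q"
  using mvec_Hecke_Lam[OF Hecke_generator[of Smat q] e1_in_Lam] by (simp add: Smat_def)

definition Tpow :: "nat \<Rightarrow> int \<Rightarrow> mat2" where
  "Tpow q m = (1, of_int m * lam q, 0, 1)"

lemma Tpow_Hecke: "Tpow q m \<in> Hecke q"
proof -
  have "Tpow q (int n) \<in> Hecke q \<and> Tpow q (- int n) \<in> Hecke q" for n
  proof (induction n)
    case 0
    then show ?case by (simp add: Tpow_def mid_def[symmetric] Hecke.one)
  next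
    case (Suc n)
    have "Tpow q (int (Suc n)) = mmul (Tmat q) (Tpow q (int n))"
      and "Tpow q (- int (Suc n)) = mmul (Tinv q) (Tpow q (- int n))"
      by (simp_all add: Tpow_def Tmat_def Tinv_def algebra_simps)
    with Suc show ?case by (auto intro: Hecke.gen)
  qed
  then show ?thesis by (cases m rule: int_cases2) auto
qed

section \<open>Coordinates of vectors of \<open>\<Lambda>\<^sub>q\<close>\<close>

definition sin_ratio :: "nat \<Rightarrow> nat \<Rightarrow> real" where
  "sin_ratio q j = sin (real j * (pi / real q)) / sin (pi / real q)"

definition V :: "nat \<Rightarrow> nat \<Rightarrow> mat2" where
  "V q j = (sin_ratio q (j + 1), sin_ratio q (j + 2), sin_ratio q j, sin_ratio q (j + 1))"

lemma sin_pi_div_pos: "q \<ge> 3 \<Longrightarrow> 0 < sin (pi / real q)"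
  by (rule sin_gt_zero) (auto simp: field_simps)

lemma sin_ratio_rec: assumes "q \<ge> 3"
  shows "sin_ratio q (j + 2) = lam q * sin_ratio q (j + 1) - sin_ratio q j"
proof -
  define t where "t = pi / real q"
  have "real (j + 2) * t = real (j + 1) * t + t" "real j * t = real (j + 1) * t - t"
    by (simp_all add: algebra_simps)
  then have "sin (real (j + 2) * t) + sin (real j * t) = 2 * sin (real (j + 1) * t) * cos t"
    by (simp add: sin_add sin_diff)
  then show ?thesis using sin_pi_div_pos[OF assms]
    by (simp add: sin_ratio_def lam_def t_def field_simps)
qed

lemma sin_ratio_0: "sin_ratio q 0 = 0"
  by (simp add: sin_ratio_def)

lemma sin_ratio_1: assumes "q \<ge> 3" shows "sin_ratio q 1 = 1"
  using sin_pi_div_pos[OF assms] by (simp add: sin_ratio_def)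

lemma sin_ratio_2: assumes "q \<ge> 3" shows "sin_ratio q 2 = lam q"
  using sin_ratio_rec[OF assms, of 0] sin_ratio_0 sin_ratio_1[OF assms] by (simp add: numeral_2_eq_2)

lemma sin_ratio_q: "q \<ge> 3 \<Longrightarrow> sin_ratio q q = 0"
  by (simp add: sin_ratio_def)

lemma sin_ratio_q_minus_1: assumes "q \<ge> 3" shows "sin_ratio q (q - 1) = 1"
proof -
  have "real (q - 1) * (pi / real q) = pi - pi / real q"
    using assms by (simp add: of_nat_diff field_simps)
  then show ?thesis using sin_pi_div_pos[OF assms] by (simp add: sin_ratio_def)
qed

lemma sin_ratio_q_plus_1: assumes "q \<ge> 3" shows "sin_ratio q (q + 1) = -1"
proof -
  have "real (q + 1) * (pi / real q) = pi / real q + pi"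
    using assms by (simp add: field_simps)
  then show ?thesis using sin_pi_div_pos[OF assms] by (simp add: sin_ratio_def)
qed

definition zero_or_ge_one :: "real \<Rightarrow> bool" where
  "zero_or_ge_one x \<longleftrightarrow> x = 0 \<or> 1 \<le> x"

lemma zero_or_ge_one_add_mult:
  assumes "zero_or_ge_one a" "zero_or_ge_one b" "zero_or_ge_one c" "zero_or_ge_one d"
  shows "zero_or_ge_one (a * b + c * d)"
proof -
  have mult: "zero_or_ge_one (x * y)" if "zero_or_ge_one x" "zero_or_ge_one y" for x y
    using that unfolding zero_or_ge_one_def
    by (metis mult_1_left mult_mono mult_zero_left mult_zero_right order_trans zero_le_one)
  show ?thesis
    using mult[OF assms(1,2)] mult[OF assms(3,4)] unfolding zero_or_ge_one_def by auto
qed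

lemma zero_or_ge_one_sin_ratio: assumes "q \<ge> 3" "j \<le> q"
  shows "zero_or_ge_one (sin_ratio q j)"
proof (cases "j = 0 \<or> j = q")
  case True
  then show ?thesis using sin_ratio_0 sin_ratio_q[OF assms(1)] by (auto simp: zero_or_ge_one_def)
next
  case False
  define t where "t = pi / real q"
  have t: "0 < t" "real q * t = pi" using assms by (simp_all add: t_def)
  have "- (pi / 2) \<le> t" using t(1) pi_gt_zero by linarith
  have j: "1 \<le> j" "j \<le> q - 1" using False assms by auto
  have mono: "sin t \<le> sin (real k * t)" if "1 \<le> k" "real k * t \<le> pi / 2" for k
    using that t \<open>- (pi / 2) \<le> t\<close> by (intro sin_monotone_2pi_le) auto
  have "sin t \<le> sin (real j * t)"
  proof (cases "real j * t \<le> pi / 2")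
    case True
    then show ?thesis using mono j by blast
  next
    case False
    have "real j * t = pi - real (q - j) * t" using j t by (simp add: of_nat_diff algebra_simps)
    then show ?thesis using mono[of "q - j"] j False by simp
  qed
  then show ?thesis
    using sin_pi_div_pos[OF assms(1)] by (simp add: zero_or_ge_one_def sin_ratio_def t_def)
qed

lemma V_0: assumes "q \<ge> 3" shows "V q 0 = Tmat q"
  using sin_ratio_0 sin_ratio_1[OF assms] sin_ratio_2[OF assms]
  by (simp add: V_def Tmat_def numeral_2_eq_2)

lemma V_last: assumes "q \<ge> 3" shows "V q (q - 1) = Smat"
  using sin_ratio_q[OF assms] sin_ratio_q_plus_1[OF assms] sin_ratio_q_minus_1[OF assms] assms
  by (simp add: V_def Smat_def)

lemma Tmat_Smat_V: assumes "q \<ge> 3"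
  shows "mvec (Tmat q) (mvec Smat (mvec (V q j) w)) = mvec (V q (Suc j)) w"
proof -
  have "mmul (mmul (Tmat q) Smat) (V q j) = V q (Suc j)"
    using sin_ratio_rec[OF assms, of j] sin_ratio_rec[OF assms, of "j + 1"]
    by (simp add: V_def Tmat_def Smat_def algebra_simps numeral_eq_Suc)
  then show ?thesis by (metis mvec_mmul)
qed

lemma Tinv_V_Suc: assumes "q \<ge> 3"
  shows "mvec (Tinv q) (mvec (V q (Suc j)) w) = mvec Smat (mvec (V q j) w)"
proof -
  have "mvec (Tinv q) (mvec (V q (Suc j)) w) = mvec (mmul (Tinv q) (Tmat q)) (mvec Smat (mvec (V q j) w))"
    by (simp add: Tmat_Smat_V[OF assms, symmetric] mvec_mmul)
  then show ?thesis by (simp add: Tinv_Tmat)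
qed

lemma Tinv_Smat: assumes "q \<ge> 3"
  shows "mvec (Tinv q) (mvec Smat w) = mvec Smat (mvec (V q (q - 2)) w)"
proof -
  have "Suc (q - 2) = q - 1" using assms by simp
  then show ?thesis using Tinv_V_Suc[OF assms, of "q - 2"] V_last[OF assms] by simp
qed

inductive_set Vorbit :: "nat \<Rightarrow> vec2 set" for q where
  basis: "v \<in> {(1, 0), (0, 1)} \<Longrightarrow> v \<in> Vorbit q"
| step: "w \<in> Vorbit q \<Longrightarrow> j < q - 1 \<Longrightarrow> mvec (V q j) w \<in> Vorbit q"

lemma Vorbit_coords: assumes "q \<ge> 3" "w \<in> Vorbit q"
  shows "zero_or_ge_one (fst w) \<and> zero_or_ge_one (snd w)"
  using assms(2)
proof induction
  case basis
  then show ?case by (auto simp: zero_or_ge_one_def)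
next
  case (step w j)
  have "zero_or_ge_one (sin_ratio q j)" "zero_or_ge_one (sin_ratio q (j + 1))"
    "zero_or_ge_one (sin_ratio q (j + 2))"
    using zero_or_ge_one_sin_ratio[OF assms(1)] step.hyps(2) by auto
  with step.IH show ?case by (cases w) (simp add: V_def zero_or_ge_one_add_mult)
qed

definition rotated_Vorbit :: "nat \<Rightarrow> vec2 set" where
  "rotated_Vorbit q = {(mvec Smat ^^ k) w |k w. w \<in> Vorbit q}"

lemma rotated_VorbitI: "w \<in> Vorbit q \<Longrightarrow> (mvec Smat ^^ k) w \<in> rotated_Vorbit q"
  unfolding rotated_Vorbit_def by blast

lemma rotated_Vorbit_rotate:
  assumes "w \<in> rotated_Vorbit q" shows "(mvec Smat ^^ k) w \<in> rotated_Vorbit q"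
proof -
  obtain l v where "v \<in> Vorbit q" "w = (mvec Smat ^^ l) v"
    using assms unfolding rotated_Vorbit_def by blast
  then show ?thesis using rotated_VorbitI[of v q "k + l"] by (simp add: funpow_add)
qed

lemma Vorbit_rotated_Vorbit: "w \<in> Vorbit q \<Longrightarrow> w \<in> rotated_Vorbit q"
  and Smat_Vorbit_rotated_Vorbit: "w \<in> Vorbit q \<Longrightarrow> mvec Smat w \<in> rotated_Vorbit q"
  using rotated_VorbitI[of w q 0] rotated_VorbitI[of w q 1] by simp_all

lemma Tmat_Vorbit: "q \<ge> 3 \<Longrightarrow> w \<in> Vorbit q \<Longrightarrow> mvec (Tmat q) w \<in> rotated_Vorbit q"
  using Vorbit_rotated_Vorbit Vorbit.step[of w q 0] by (simp add: V_0)

lemma Tmat_Smat_Vorbit: assumes q: "q \<ge> 3" and w: "w \<in> Vorbit q"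
  shows "mvec (Tmat q) (mvec Smat w) \<in> rotated_Vorbit q"
  using w
proof cases
  case basis
  then consider "w = (1, 0)" | "w = (0, 1)" by blast
  then show ?thesis
  proof cases
    case 1
    have "mvec (Tmat q) (mvec Smat w) = mvec (V q 0) (0, 1)"
      using q 1 by (simp add: V_0 Tmat_def Smat_def)
    then show ?thesis using q Vorbit_rotated_Vorbit by (simp add: Vorbit.intros)
  next
    case 2
    have "mvec (Tmat q) (mvec Smat w) = mvec Smat (mvec Smat (1, 0))"
      using 2 by (simp add: Tmat_def Smat_def)
    then show ?thesis
      using rotated_Vorbit_rotate[OF Smat_Vorbit_rotated_Vorbit[OF Vorbit.basis[of "(1, 0)" q]], where k = 1]
      by simp
  qed
next
  case (step v j)
  then have eq: "mvec (Tmat q) (mvec Smat w) = mvec (V q (Suc j)) v"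
    using Tmat_Smat_V[OF q] by simp
  show ?thesis
  proof (cases "Suc j < q - 1")
    case True
    then show ?thesis using eq step Vorbit_rotated_Vorbit Vorbit.step by metis
  next
    case False
    then have "Suc j = q - 1" using step by simp
    then show ?thesis using eq step Smat_Vorbit_rotated_Vorbit V_last[OF q] by simp
  qed
qed

lemma Tinv_Vorbit: assumes q: "q \<ge> 3" and w: "w \<in> Vorbit q"
  shows "mvec (Tinv q) w \<in> rotated_Vorbit q"
  using w
proof cases
  case basis
  then consider "w = (1, 0)" | "w = (0, 1)" by blast
  then show ?thesis
  proof cases
    case 1
    then show ?thesis using Vorbit_rotated_Vorbit Vorbit.basis by (simp add: Tinv_def)
  next
    case 2
    then have "mvec (Tinv q) w = mvec Smat (mvec (V q (q - 2)) (1, 0))"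
      using Tinv_Smat[OF q, of "(1, 0)"] by (simp add: Smat_def)
    then show ?thesis using q Smat_Vorbit_rotated_Vorbit by (simp add: Vorbit.intros)
  qed
next
  case (step v j)
  show ?thesis
  proof (cases j)
    case 0
    then have "mvec (Tinv q) w = v"
      using step(1) V_0[OF q] by (simp add: mvec_mmul[symmetric] Tinv_Tmat)
    then show ?thesis using step Vorbit_rotated_Vorbit by simp
  next
    case (Suc i)
    then have "mvec (Tinv q) w = mvec Smat (mvec (V q i) v)"
      using step(1) Tinv_V_Suc[OF q] by simp
    then show ?thesis using step Suc Smat_Vorbit_rotated_Vorbit Vorbit.step[of v q i] by simp
  qed
qed

lemma Tinv_Smat_Vorbit: assumes q: "q \<ge> 3" and w: "w \<in> Vorbit q"
  shows "mvec (Tinv q) (mvec Smat w) \<in> rotated_Vorbit q"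
  using Tinv_Smat[OF q] Smat_Vorbit_rotated_Vorbit Vorbit.step[OF w, of "q - 2"] q by simp

lemma rotated_Vorbit_generator:
  assumes q: "q \<ge> 3" and X: "X \<in> {Smat, Sinv, Tmat q, Tinv q}" and w: "w \<in> rotated_Vorbit q"
  shows "mvec X w \<in> rotated_Vorbit q"
proof -
  obtain k v where v: "v \<in> Vorbit q" and wk: "w = (mvec Smat ^^ k) v"
    using w unfolding rotated_Vorbit_def by blast
  have T: "mvec X w \<in> rotated_Vorbit q"
    if "\<And>v. v \<in> Vorbit q \<Longrightarrow> mvec X v \<in> rotated_Vorbit q"
       "\<And>v. v \<in> Vorbit q \<Longrightarrow> mvec X (mvec Smat v) \<in> rotated_Vorbit q"
  proof -
    have k: "k = 2 * (k div 2) + k mod 2" by simp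
    have "mvec X w = (mvec Smat ^^ (2 * (k div 2))) (mvec X ((mvec Smat ^^ (k mod 2)) v))"
      unfolding wk by (subst k) (simp only: funpow_add comp_def mvec_commute_Smat_pow_even)
    moreover have "mvec X ((mvec Smat ^^ (k mod 2)) v) \<in> rotated_Vorbit q"
      using that v by (cases "k mod 2 = 0") (auto simp: mod_2_eq_odd)
    ultimately show ?thesis using rotated_Vorbit_rotate by simp
  qed
  consider "X = Smat" | "X = Sinv" | "X = Tmat q" | "X = Tinv q" using X by blast
  then show ?thesis
  proof cases
    case 1
    then show ?thesis using rotated_Vorbit_rotate[OF w, of 1] by simp
  next
    case 2
    then show ?thesis using rotated_Vorbit_rotate[OF w, of 3] by (simp add: mvec_Sinv_eq_Smat_cubed)
  next
    case 3
    then show ?thesis using T Tmat_Vorbit[OF q] Tmat_Smat_Vorbit[OF q] by blast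
  next
    case 4
    then show ?thesis using T Tinv_Vorbit[OF q] Tinv_Smat_Vorbit[OF q] by blast
  qed
qed

lemma Lam_subset_rotated_Vorbit: assumes q: "q \<ge> 3" shows "Lam q \<subseteq> rotated_Vorbit q"
proof
  fix w assume "w \<in> Lam q"
  then obtain g where g: "g \<in> Hecke q" "w = mvec g (1, 0)" unfolding Lam_def by blast
  have "mvec g (1, 0) \<in> rotated_Vorbit q" using g(1)
  proof induction
    case one
    then show ?case using Vorbit_rotated_Vorbit Vorbit.basis by simp
  next
    case (gen g X)
    then show ?case using rotated_Vorbit_generator[OF q] by (simp add: mvec_mmul)
  qed
  with g show "w \<in> rotated_Vorbit q" by simp
qed

lemma Lam_coords: assumes q: "q \<ge> 3" and w: "w \<in> Lam q"
  shows "zero_or_ge_one \<bar>fst w\<bar> \<and> zero_or_ge_one \<bar>snd w\<bar>"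
proof -
  obtain k v where v: "v \<in> Vorbit q" and wk: "w = (mvec Smat ^^ k) v"
    using Lam_subset_rotated_Vorbit[OF q] w unfolding rotated_Vorbit_def by blast
  have "zero_or_ge_one \<bar>fst v\<bar> \<and> zero_or_ge_one \<bar>snd v\<bar>"
    using Vorbit_coords[OF q v] Vorbit_coords[OF q v] by (auto simp: zero_or_ge_one_def)
  then show ?thesis unfolding wk
    by (induction k) (auto simp: mvec_Smat)
qed

section \<open>Farey triangle representatives\<close>

lemma Lam_horizontal: assumes q: "q \<ge> 3" and w: "(x, 0) \<in> Lam q" shows "\<bar>x\<bar> = 1"
proof -
  obtain g where g: "g \<in> Hecke q" "(x, 0) = mvec g (1, 0)" using w unfolding Lam_def by blast
  obtain a b c d where ge: "g = (a, b, c, d)" by (cases g rule: prod_cases4)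
  have xa: "x = a" "c = 0" using g(2) ge by auto
  have ad: "a * d = 1" using Hecke_det[OF g(1)] ge xa by simp
  have "mvec g (0, 1) \<in> Lam q" using mvec_Hecke_Lam[OF g(1) e2_in_Lam] .
  then have "zero_or_ge_one \<bar>d\<bar>" using Lam_coords[OF q] ge by fastforce
  moreover have "zero_or_ge_one \<bar>a\<bar>" using Lam_coords[OF q w] xa by simp
  moreover have "\<bar>a\<bar> * \<bar>d\<bar> = 1" using ad by (metis abs_mult abs_one)
  ultimately have "1 \<le> \<bar>a\<bar>" "1 \<le> \<bar>d\<bar>" unfolding zero_or_ge_one_def by auto
  then have "\<bar>a\<bar> \<le> \<bar>a\<bar> * \<bar>d\<bar>" by (simp add: mult_le_cancel_left1)
  with \<open>1 \<le> \<bar>a\<bar>\<close> \<open>\<bar>a\<bar> * \<bar>d\<bar> = 1\<close> show ?thesis using xa by simp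
qed

text \<open>Translating by a multiple of \<open>\<lambda>\<^sub>q\<close> brings \<open>t\<close> within distance 1 of a point of \<open>\<Lambda>\<^sub>q\<close>
  on the same horizontal line, which forces \<open>t\<close> onto that point.\<close>
lemma Lam_height_one: assumes q: "q \<ge> 3" and w: "(t, 1) \<in> Lam q" and t: "\<bar>t\<bar> < lam q"
  shows "t = 0"
proof -
  have l: "0 < lam q" "lam q < 2" using lam_pos[OF q] lam_less_2[OF q] .
  obtain m :: int where m: "\<bar>t - of_int m * lam q\<bar> < 1" "m \<in> {-1, 0, 1}"
  proof -
    consider "t \<ge> lam q / 2" | "t \<le> - lam q / 2" | "\<bar>t\<bar> < lam q / 2" by linarith
    then show ?thesis
      by cases (use that[of 1] that[of "-1"] that[of 0] t l in auto)
  qed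
  have "mvec (Tpow q (- m)) (t, 1) \<in> Lam q" using mvec_Hecke_Lam[OF Tpow_Hecke w] .
  then have "zero_or_ge_one \<bar>t - of_int m * lam q\<bar>" using Lam_coords[OF q] by (auto simp: Tpow_def)
  then have "t = of_int m * lam q" using m(1) unfolding zero_or_ge_one_def by auto
  then show ?thesis using m(2) t by auto
qed

lemma gmat_Lam_inj:
  assumes q: "q \<ge> 3" and p: "p \<in> Tq q" and p': "p' \<in> Tq q"
    and eq: "img (gmat p) (Lam q) = img (gmat p') (Lam q)"
  shows "p = p'"
proof -
  obtain a b a' b' where pe: "p = (a, b)" and pe': "p' = (a', b')" by (cases p, cases p')
  have pa: "0 < a" "a \<le> 1" "1 - lam q * a < b" "b \<le> 1" using p pe by (auto simp: Tq_def)
  have pa': "0 < a'" "a' \<le> 1" "1 - lam q * a' < b'" "b' \<le> 1" using p' pe' by (auto simp: Tq_def)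
  have "mvec (gmat p) (1, 0) \<in> img (gmat p') (Lam q)" using eq e1_in_Lam unfolding img_def by blast
  then obtain x y where xy: "(x, y) \<in> Lam q" "mvec (gmat p) (1, 0) = mvec (gmat p') (x, y)"
    unfolding img_def by auto
  then have "y = 0" "a' * x = a" using pa' by (auto simp: gmat_def pe pe')
  with Lam_horizontal[OF q] xy(1) have "\<bar>a / a'\<bar> = 1" using pa' by (auto simp: abs_mult)
  then have a: "a = a'" using pa pa' by (auto simp: field_simps split: abs_split)
  have "mvec (gmat p) (0, 1) \<in> img (gmat p') (Lam q)" using eq e2_in_Lam unfolding img_def by blast
  then obtain z1 z2 where z: "(z1, z2) \<in> Lam q" "mvec (gmat p) (0, 1) = mvec (gmat p') (z1, z2)"
    unfolding img_def by auto
  then have z2: "z2 = 1" and b: "a * z1 = b - b'" using pa a by (auto simp: gmat_def pe pe' field_simps)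
  have "\<bar>a * z1\<bar> < lam q * a" using pa pa' a b by auto
  then have "\<bar>z1\<bar> < lam q" using pa by (simp add: abs_mult)
  then have "z1 = 0" using Lam_height_one[OF q] z(1) z2 by auto
  then show ?thesis using a b pe pe' by simp
qed

lemma Tq_representative_exists:
  assumes q: "q \<ge> 3" and B: "mdet B = 1" and cB: "(c, 0) \<in> img B (Lam q)" and c: "0 < c" "c \<le> 1"
  shows "\<exists>b. (c, b) \<in> Tq q \<and> img B (Lam q) = img (gmat (c, b)) (Lam q)"
proof -
  obtain g where g: "g \<in> Hecke q" "(c, 0) = mvec B (mvec g (1, 0))"
    using cB unfolding img_def Lam_def by blast
  obtain c1 c2 c3 c4 where C: "mmul B g = (c1, c2, c3, c4)" by (cases "mmul B g" rule: prod_cases4)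
  have "(c, 0) = mvec (mmul B g) (1, 0)" using g(2) by (simp add: mvec_mmul)
  then have cc: "c1 = c" "c3 = 0" using C by auto
  have "mdet (mmul B g) = 1" using B Hecke_det[OF g(1)] by (simp add: mdet_mmul)
  then have c4: "c4 = 1 / c" using C cc c by (simp add: field_simps)
  have cl: "0 < c * lam q" using c lam_pos[OF q] by simp
  define m where "m = \<lfloor>(1 - c2) / (c * lam q)\<rfloor>"
  have m1: "of_int m * (c * lam q) \<le> 1 - c2"
    using cl by (metis m_def of_int_floor_le pos_le_divide_eq)
  have m2: "1 - c2 < (of_int m + 1) * (c * lam q)"
    using cl by (metis m_def real_of_int_floor_add_one_gt pos_divide_less_eq)
  define b where "b = c2 + c * of_int m * lam q"
  have "(c, b) \<in> Tq q" using m1 m2 c unfolding Tq_def b_def by (auto simp: algebra_simps)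
  moreover have "img B (Lam q) = img (mmul (mmul B g) (Tpow q m)) (Lam q)"
    by (simp add: img_mmul img_Hecke_Lam[OF g(1)] img_Hecke_Lam[OF Tpow_Hecke])
  moreover have "mmul (mmul B g) (Tpow q m) = gmat (c, b)"
    using C cc c4 by (simp add: Tpow_def gmat_def b_def algebra_simps)
  ultimately show ?thesis by auto
qed

definition farey_rep :: "nat \<Rightarrow> mat2 \<Rightarrow> real \<times> real" where
  "farey_rep q B = (THE p. p \<in> Tq q \<and> img B (Lam q) = img (gmat p) (Lam q))"

lemma FTR_eq_farey_rep: "FTR q A t u = farey_rep q (mmul (smat (1 / t)) (mmul (hmat (slope u)) A))"
  by (simp add: FTR_def farey_rep_def)

lemma BCZ_eq_farey_rep: "BCZ q p = farey_rep q (mmul (hmat (roof q p)) (gmat p))"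
  by (simp add: BCZ_def farey_rep_def)

lemma farey_rep_eqI:
  assumes "q \<ge> 3" "p \<in> Tq q" "img B (Lam q) = img (gmat p) (Lam q)"
  shows "farey_rep q B = p"
  unfolding farey_rep_def using assms gmat_Lam_inj by (intro the_equality) auto

lemma farey_rep:
  assumes q: "q \<ge> 3" and B: "mdet B = 1" and cB: "(c, 0) \<in> img B (Lam q)" and c: "0 < c" "c \<le> 1"
  shows "\<exists>!p. p \<in> Tq q \<and> img B (Lam q) = img (gmat p) (Lam q)"
    and "farey_rep q B \<in> Tq q"
    and "img B (Lam q) = img (gmat (farey_rep q B)) (Lam q)"
    and "fst (farey_rep q B) = c"
proof -
  obtain b where b: "(c, b) \<in> Tq q" "img B (Lam q) = img (gmat (c, b)) (Lam q)"
    using Tq_representative_exists[OF assms] by blast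
  show "\<exists>!p. p \<in> Tq q \<and> img B (Lam q) = img (gmat p) (Lam q)"
    using b gmat_Lam_inj[OF q] by (intro ex1I[of _ "(c, b)"]) auto
  have "farey_rep q B = (c, b)" using farey_rep_eqI[OF q b] .
  then show "farey_rep q B \<in> Tq q" "img B (Lam q) = img (gmat (farey_rep q B)) (Lam q)"
    "fst (farey_rep q B) = c"
    using b by simp_all
qed

section \<open>Successive slopes and the BCZ map\<close>

definition shear_rescale :: "real \<Rightarrow> real \<Rightarrow> mat2" where
  "shear_rescale t s = mmul (smat (1 / t)) (hmat s)"

lemma mvec_shear_rescale: "mvec (shear_rescale t s) (x, y) = (x / t, t * (y - s * x))"
  by (simp add: shear_rescale_def hmat_def smat_def algebra_simps)

lemma mdet_shear_rescale: "t \<noteq> 0 \<Longrightarrow> mdet (shear_rescale t s) = 1"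
  by (simp add: shear_rescale_def hmat_def smat_def)

lemma shear_rescale_slope: "fst z \<noteq> 0 \<Longrightarrow> mvec (shear_rescale t (slope z)) z = (fst z / t, 0)"
  by (cases z) (simp add: mvec_shear_rescale slope_def)

lemma shear_rescale_Strip: "0 < t \<Longrightarrow> mvec (shear_rescale t s) z \<in> Strip 1 \<longleftrightarrow> z \<in> Strip t"
  by (cases z) (simp add: mvec_shear_rescale Strip_def field_simps)

lemma slope_shear_rescale:
  "t \<noteq> 0 \<Longrightarrow> fst z \<noteq> 0 \<Longrightarrow> slope (mvec (shear_rescale t s) z) = t\<^sup>2 * (slope z - s)"
  by (cases z) (simp add: mvec_shear_rescale slope_def field_simps power2_eq_square)

lemma hmat_shear_rescale:
  "t \<noteq> 0 \<Longrightarrow> mmul (hmat (t\<^sup>2 * (s' - s))) (shear_rescale t s) = shear_rescale t s'"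
  by (simp add: shear_rescale_def hmat_def smat_def field_simps power2_eq_square)

definition successive_slope :: "vec2 set \<Rightarrow> vec2 \<Rightarrow> vec2 \<Rightarrow> bool" where
  "successive_slope X u v \<longleftrightarrow>
     slope u < slope v \<and> (\<forall>w \<in> X. slope u < slope w \<longrightarrow> slope v \<le> slope w)"

text \<open>The shear-rescaling by \<open>slope u\<close> turns slopes above \<open>slope u\<close> monotonically into positive
  slopes, so the vector of next slope becomes the vector of smallest positive slope.\<close>
lemma roof_shear_rescale:
  assumes t: "0 < t" and p: "img (gmat p) (Lam q) = img (shear_rescale t (slope u)) X"
    and v: "v \<in> X \<inter> Strip t" and uv: "successive_slope (X \<inter> Strip t) u v"
  shows "roof q p = t\<^sup>2 * (slope v - slope u)"
proof -
  let ?N = "mvec (shear_rescale t (slope u))" and ?Y = "img (gmat p) (Lam q) \<inter> Strip 1"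
  let ?r = "t\<^sup>2 * (slope v - slope u)"
  have slope_N: "slope (?N z) = t\<^sup>2 * (slope z - slope u)" if "z \<in> Strip t" for z
    using that t by (intro slope_shear_rescale) (auto simp: Strip_def)
  have "?Y = ?N ` X \<inter> Strip 1" using p by (simp add: img_def)
  also have "\<dots> = ?N ` (X \<inter> Strip t)" using shear_rescale_Strip[OF t] by auto
  finally have Y: "?Y = ?N ` (X \<inter> Strip t)" .
  have "?N v \<in> ?N ` (X \<inter> Strip t)" using v by (rule imageI)
  then have Nv: "?N v \<in> ?Y" "slope (?N v) = ?r" using Y slope_N v by simp_all
  have "slope u < slope v" using uv unfolding successive_slope_def by blast
  then have pos: "0 < ?r" using t by simp
  have minimal: "?r \<le> slope w" if "w \<in> ?Y" "0 < slope w" for w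
  proof -
    from that(1) obtain z where z: "z \<in> X \<inter> Strip t" "w = ?N z" unfolding Y by (rule imageE)
    have w: "slope w = t\<^sup>2 * (slope z - slope u)" using z slope_N by simp
    have "0 < slope z - slope u" using that(2) t unfolding w by (simp add: zero_less_mult_iff)
    then have "slope v \<le> slope z" using uv z(1) unfolding successive_slope_def by auto
    then show ?thesis unfolding w by (simp add: mult_left_mono)
  qed
  show ?thesis unfolding roof_def
  proof (rule the_equality)
    show "\<exists>v' \<in> ?Y. slope v' = ?r \<and> 0 < ?r \<and> (\<forall>w \<in> ?Y. 0 < slope w \<longrightarrow> ?r \<le> slope w)"
      using Nv minimal pos by blast
    fix r assume "\<exists>v' \<in> ?Y. slope v' = r \<and> 0 < r \<and> (\<forall>w \<in> ?Y. 0 < slope w \<longrightarrow> r \<le> slope w)"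
    then obtain v' where v': "v' \<in> ?Y" "slope v' = r" "0 < r"
      and least: "\<forall>w \<in> ?Y. 0 < slope w \<longrightarrow> r \<le> slope w"
      by blast
    have "r \<le> ?r" using least Nv pos by metis
    moreover have "?r \<le> r" using minimal v' by blast
    ultimately show "r = ?r" by simp
  qed
qed

lemma FTR_matrix: "mmul (smat (1 / t)) (mmul (hmat s) A) = mmul (shear_rescale t s) A"
  by (simp add: shear_rescale_def mmul_assoc)

lemma FTR_representative:
  assumes q: "q \<ge> 3" and A: "mdet A = 1" and t: "0 < t" and u: "u \<in> img A (Lam q) \<inter> Strip t"
  shows "(fst u / t, 0) \<in> img (mmul (smat (1 / t)) (mmul (hmat (slope u)) A)) (Lam q)"
    and "(fst u / t, 0) \<in> Strip 1"
    and "\<exists>!p. p \<in> Tq q \<and> img (mmul (smat (1 / t)) (mmul (hmat (slope u)) A)) (Lam q) = img (gmat p) (Lam q)"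
    and "FTR q A t u \<in> Tq q"
    and "img (mmul (smat (1 / t)) (mmul (hmat (slope u)) A)) (Lam q) = img (gmat (FTR q A t u)) (Lam q)"
    and "fst (FTR q A t u) = fst u / t"
proof -
  have fst_u: "0 < fst u" "fst u \<le> t" using u by (auto simp: Strip_def)
  have "mvec (shear_rescale t (slope u)) u = (fst u / t, 0)"
    using fst_u by (simp add: shear_rescale_slope)
  moreover have "mvec (shear_rescale t (slope u)) u \<in> img (mmul (shear_rescale t (slope u)) A) (Lam q)"
    using u unfolding img_mmul by (simp add: img_def)
  ultimately show hor: "(fst u / t, 0) \<in> img (mmul (smat (1 / t)) (mmul (hmat (slope u)) A)) (Lam q)"
    by (simp add: FTR_matrix)
  show "(fst u / t, 0) \<in> Strip 1" using fst_u t by (simp add: Strip_def)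
  have det: "mdet (mmul (smat (1 / t)) (mmul (hmat (slope u)) A)) = 1"
    using A t by (simp add: FTR_matrix mdet_mmul mdet_shear_rescale)
  have c: "0 < fst u / t" "fst u / t \<le> 1" using fst_u t by simp_all
  note rep = farey_rep[OF q det hor c]
  show "\<exists>!p. p \<in> Tq q \<and> img (mmul (smat (1 / t)) (mmul (hmat (slope u)) A)) (Lam q) = img (gmat p) (Lam q)"
    by (rule rep(1))
  show "FTR q A t u \<in> Tq q"
    "img (mmul (smat (1 / t)) (mmul (hmat (slope u)) A)) (Lam q) = img (gmat (FTR q A t u)) (Lam q)"
    "fst (FTR q A t u) = fst u / t"
    using rep(2-4) by (simp_all add: FTR_eq_farey_rep)
qed

lemma roof_FTR:
  assumes q: "q \<ge> 3" and A: "mdet A = 1" and t: "0 < t"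
    and u: "u \<in> img A (Lam q) \<inter> Strip t" and v: "v \<in> img A (Lam q) \<inter> Strip t"
    and uv: "successive_slope (img A (Lam q) \<inter> Strip t) u v"
  shows "roof q (FTR q A t u) = t\<^sup>2 * (slope v - slope u)"
  using FTR_representative(5)[OF q A t u] t v uv
  by (intro roof_shear_rescale) (simp_all add: FTR_matrix img_mmul)

lemma BCZ_FTR:
  assumes q: "q \<ge> 3" and A: "mdet A = 1" and t: "0 < t"
    and u: "u \<in> img A (Lam q) \<inter> Strip t" and v: "v \<in> img A (Lam q) \<inter> Strip t"
    and uv: "successive_slope (img A (Lam q) \<inter> Strip t) u v"
  shows "BCZ q (FTR q A t u) = FTR q A t v"
proof -
  have "img (mmul (hmat (roof q (FTR q A t u))) (gmat (FTR q A t u))) (Lam q)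
      = img (mmul (mmul (hmat (t\<^sup>2 * (slope v - slope u))) (shear_rescale t (slope u))) A) (Lam q)"
    using FTR_representative(5)[OF q A t u] roof_FTR[OF assms]
    by (simp add: FTR_matrix img_mmul)
  also have "\<dots> = img (gmat (FTR q A t v)) (Lam q)"
    using FTR_representative(5)[OF q A t v] t by (simp add: hmat_shear_rescale FTR_matrix)
  finally show ?thesis
    unfolding BCZ_eq_farey_rep using FTR_representative(4)[OF q A t v] q by (intro farey_rep_eqI)
qed

theorem mainTheorem8:
  fixes q :: nat and A :: mat2 and \<tau> :: real and u :: "nat \<Rightarrow> vec2"
  assumes hq: "q \<ge> 3"
    and hA: "mdet A = 1"
    and htau: "\<tau> > 0"
    and hne: "img A (Lam q) \<inter> Strip \<tau> \<noteq> {}"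
    and hu: "\<forall>n. u n \<in> img A (Lam q) \<inter> Strip \<tau>"
    and hsucc: "\<forall>n. slope (u n) < slope (u (Suc n)) \<and>
       (\<forall>w \<in> img A (Lam q) \<inter> Strip \<tau>. slope (u n) < slope w \<longrightarrow> slope (u (Suc n)) \<le> slope w)"
  shows
    "(fst (u 0) / \<tau>, 0) \<in> img (mmul (smat (1/\<tau>)) (mmul (hmat (slope (u 0))) A)) (Lam q)
     \<and> (fst (u 0) / \<tau>, 0) \<in> Strip 1
     \<and> (\<exists>!p. p \<in> Tq q \<and>
          img (mmul (smat (1/\<tau>)) (mmul (hmat (slope (u 0))) A)) (Lam q) = img (gmat p) (Lam q))
     \<and> (\<forall>n.
          (fst (u n) / \<tau>, 0) \<in> img (mmul (smat (1/\<tau>)) (mmul (hmat (slope (u n))) A)) (Lam q)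
        \<and> (fst (u n) / \<tau>, 0) \<in> Strip 1
        \<and> img (mmul (smat (1/\<tau>)) (mmul (hmat (slope (u n))) A)) (Lam q)
            = img (gmat ((BCZ q ^^ n) (FTR q A \<tau> (u 0)))) (Lam q)
        \<and> FTR q A \<tau> (u n) = (BCZ q ^^ n) (FTR q A \<tau> (u 0)))
     \<and> (\<forall>n.
          fst (u n) = \<tau> * fst ((BCZ q ^^ n) (FTR q A \<tau> (u 0)))
        \<and> snd (u (Suc n)) = fst (u (Suc n)) *
            (snd (u n) / fst (u n) + roof q ((BCZ q ^^ n) (FTR q A \<tau> (u 0))) / \<tau>^2))"
proof -
  \<comment> \<open>\<open>hne\<close> is implied by \<open>hu\<close> and not needed.\<close>
  note FTR = FTR_representative[OF hq hA htau hu[rule_format]]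
  have succ: "successive_slope (img A (Lam q) \<inter> Strip \<tau>) (u n) (u (Suc n))" for n
    using hsucc unfolding successive_slope_def by blast
  note roof = roof_FTR[OF hq hA htau hu[rule_format] hu[rule_format] succ]
  have orbit: "(BCZ q ^^ n) (FTR q A \<tau> (u 0)) = FTR q A \<tau> (u n)" for n
    by (induction n) (simp_all add: BCZ_FTR[OF hq hA htau hu[rule_format] hu[rule_format] succ])
  have fst_pos: "fst (u n) > 0" for n using hu by (simp add: Strip_def)
  have "snd (u (Suc n)) = fst (u (Suc n)) * (snd (u n) / fst (u n) + roof q (FTR q A \<tau> (u n)) / \<tau>^2)"
    for n using roof[of n] htau fst_pos[of "Suc n"] by (simp add: slope_def)
  with FTR htau show ?thesis by (simp add: orbit)
qed

end
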